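(* Let $(P_n)_{n\ge 0}$ be the Padovan sequence and for $1\le b\le 3$ and $m\ge 0$ let $r_m^{(3,b)}=\sum_{k=0}^{m}P_{3k+b}$. Then for every $b\in\{1,2,3\}$ and every $m\ge 3$, $$r_m^{(3,b)}=3r_{m-1}^{(3,b)}-2r_{m-2}^{(3,b)}+r_{m-3}^{(3,b)}+1.$$
   Context: The Padovan sequence is defined by $P_0=P_1=P_2=1$ and $P_{n+3}=P_{n+1}+P_n$. *)

theory Defs
  imports Main
begin

fun padovan :: "nat \<Rightarrow> int" where
  "padovan 0 = 1"
| "padovan (Suc 0) = 1"
| "padovan (Suc (Suc 0)) = 1"
| "padovan (Suc (Suc (Suc n))) = padovan (Suc n) + padovan n"

definition r3 :: "nat \<Rightarrow> nat \<Rightarrow> int" where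
  "r3 b m = (\<Sum>k=0..m. padovan (3*k + b))"

end

theory Submission
  imports Defs
begin

text \<open>Every third Padovan number satisfies a linear recurrence of its own: with
  \<open>x\<^sup>3 = x + 1\<close>, the cube \<open>y = x\<^sup>3\<close> of a root satisfies \<open>y\<^sup>3 = 3y\<^sup>2 - 2y + 1\<close>.
  Hence the defect \<open>r\<^sub>m - 3r\<^sub>m\<^sub>-\<^sub>1 + 2r\<^sub>m\<^sub>-\<^sub>2 - r\<^sub>m\<^sub>-\<^sub>3\<close> of the partial sums has
  increments that vanish, so it is constant, and its value at \<open>m = 3\<close> is \<open>1\<close>.\<close>

lemma padovan_add_3: "padovan (n + 3) = padovan (n + 1) + padovan n"
  by (simp add: eval_nat_numeral)

lemma padovan_add_9:
  "padovan (n + 9) = 3 * padovan (n + 6) - 2 * padovan (n + 3) + padovan n"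
proof -
  have step: "padovan (n + k + 3) = padovan (n + k + 1) + padovan (n + k)" for k
    using padovan_add_3[of "n + k"] by (simp add: add.assoc)
  have "padovan (n + 9) = padovan (n + 7) + padovan (n + 6)"
    and "padovan (n + 8) = padovan (n + 6) + padovan (n + 5)"
    and "padovan (n + 7) = padovan (n + 5) + padovan (n + 4)"
    and "padovan (n + 6) = padovan (n + 4) + padovan (n + 3)"
    and "padovan (n + 5) = padovan (n + 3) + padovan (n + 2)"
    and "padovan (n + 4) = padovan (n + 2) + padovan (n + 1)"
    and "padovan (n + 3) = padovan (n + 1) + padovan n"
    using step[of 6] step[of 5] step[of 4] step[of 3] step[of 2] step[of 1] step[of 0]
    by (simp_all only: add.assoc numeral_plus_numeral numeral_plus_one one_plus_numeral
        semiring_norm add_0_right)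
  then show ?thesis by linarith
qed

lemma r3_Suc: "r3 b (Suc m) = r3 b m + padovan (3 * Suc m + b)"
  unfolding r3_def by simp

definition r3_defect :: "nat \<Rightarrow> nat \<Rightarrow> int" where
  "r3_defect b m = r3 b (m + 3) - 3 * r3 b (m + 2) + 2 * r3 b (m + 1) - r3 b m"

lemma r3_defect_Suc: "r3_defect b (Suc m) = r3_defect b m"
proof -
  have "r3_defect b (Suc m) - r3_defect b m
      = padovan (3 * m + b + 12) - 3 * padovan (3 * m + b + 9)
        + 2 * padovan (3 * m + b + 6) - padovan (3 * m + b + 3)"
    unfolding r3_defect_def
    using r3_Suc[of b "m + 3"] r3_Suc[of b "m + 2"] r3_Suc[of b "m + 1"] r3_Suc[of b m]
    by (simp add: algebra_simps del: padovan.simps)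
  also have "\<dots> = 0"
    using padovan_add_9[of "3 * m + b + 3"] by (simp add: add.assoc del: padovan.simps)
  finally show ?thesis by simp
qed

lemma r3_defect_const: "r3_defect b m = r3_defect b 0"
  by (induction m) (simp_all only: r3_defect_Suc)

lemma r3_defect_0: "b \<in> {1, 2, 3} \<Longrightarrow> r3_defect b 0 = 1"
  by (auto simp: r3_defect_def r3_def eval_nat_numeral)

theorem theorem4p3:
  fixes b m :: nat
  assumes "b \<in> {1,2,3}" and "m \<ge> 3"
  shows "r3 b m = 3 * r3 b (m-1) - 2 * r3 b (m-2) + r3 b (m-3) + 1"
proof -
  obtain n where m: "m = n + 3"
    using assms(2) by (metis add.commute le_iff_add)
  have "r3_defect b n = 1"
    using r3_defect_const[of b n] r3_defect_0[OF assms(1)] by simp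
  moreover have "m - 1 = n + 2" "m - 2 = n + 1" "m - 3 = n"
    using m by auto
  ultimately show ?thesis
    unfolding r3_defect_def m by simp
qed

end
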